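(* Let $n\ge 1$ and let $X_1,\dots,X_n$ be non-negative random variables defined on a common probability space, where for each $i\in[n]=\{1,\dots,n\}$ the variable $X_i$ has a continuous distribution function $F_i$. No assumption is made about the joint distribution of $(X_1,\dots,X_n)$ (in particular, independence is not assumed). Let $s>0$ and suppose $t(n,s)>0$ satisfies $$ s=\sum_{i=1}^n \int_0^{t(n,s)} x\, dF_i(x). $$ Then $$ \mathbb{E}\Big[\max\Big\{|A| : A\subset[n],\ \sum_{i\in A} X_i\le s\Big\}\Big]\le \sum_{i=1}^n F_i(t(n,s)). $$
   Context: $|A|$ denotes the cardinality of $A$; the empty set is allowed in the maximum, so the maximum is well defined. *)

theory Defs
  imports "HOL-Probability.Probability"
begin

end

theory Submission
  imports Defs
begin

text \<open>
  Put \<open>w x = 1[x \<le> t] - 1[0 \<le> x \<le> t] x / t\<close>. For every \<open>x \<ge> 0\<close> we have \<open>0 \<le> w x\<close> and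
  \<open>1 \<le> x / t + w x\<close>, so any \<open>A\<close> with \<open>\<Sum>\<^sub>A X\<^sub>i \<le> s\<close> satisfies
  \<open>|A| \<le> s / t + \<Sum>\<^sub>i w(X\<^sub>i)\<close> pointwise. Taking expectations, \<open>\<EE> w(X\<^sub>i) = F\<^sub>i(t) - \<integral>\<^sub>0\<^sup>t x dF\<^sub>i / t\<close>,
  and by the choice of \<open>t\<close> the terms \<open>s / t\<close> cancel.
\<close>

definition truncation_weight :: "real \<Rightarrow> real \<Rightarrow> real" where
  "truncation_weight t x = indicator {..t} x - indicator {0..t} x * x / t"

lemma truncation_weight_nonneg:
  assumes "t > 0" "x \<ge> 0"
  shows "truncation_weight t x \<ge> 0"
  using assms by (auto simp: truncation_weight_def indicator_def field_simps)

lemma one_le_div_add_truncation_weight: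
  assumes "t > 0" "x \<ge> 0"
  shows "1 \<le> x / t + truncation_weight t x"
  using assms by (cases "x \<le> t") (auto simp: truncation_weight_def indicator_def field_simps)

lemma abs_truncation_weight_le:
  assumes "t > 0"
  shows "\<bar>truncation_weight t x\<bar> \<le> 2"
  using assms by (auto simp: truncation_weight_def indicator_def field_simps)

lemma truncation_weight_borel_measurable [measurable]:
  "truncation_weight t \<in> borel_measurable borel"
  unfolding truncation_weight_def[abs_def] by measurable

lemma card_le_truncation_weight_bound:
  fixes x :: "'i \<Rightarrow> real"
  assumes "finite I" "A \<subseteq> I" "t > 0" "\<And>i. i \<in> I \<Longrightarrow> x i \<ge> 0" "(\<Sum>i\<in>A. x i) \<le> s"
  shows "real (card A) \<le> s / t + (\<Sum>i\<in>I. truncation_weight t (x i))"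
proof -
  have "real (card A) = (\<Sum>i\<in>A. 1)"
    by simp
  also have "\<dots> \<le> (\<Sum>i\<in>A. x i / t + truncation_weight t (x i))"
    using assms by (intro sum_mono one_le_div_add_truncation_weight) auto
  also have "\<dots> = (\<Sum>i\<in>A. x i) / t + (\<Sum>i\<in>A. truncation_weight t (x i))"
    by (simp add: sum.distrib sum_divide_distrib)
  also have "(\<Sum>i\<in>A. x i) / t \<le> s / t"
    using assms by (simp add: divide_right_mono)
  also have "(\<Sum>i\<in>A. truncation_weight t (x i)) \<le> (\<Sum>i\<in>I. truncation_weight t (x i))"
    using assms by (intro sum_mono2 truncation_weight_nonneg) auto
  finally show ?thesis
    by simp
qed

lemma Max_card_le_truncation_weight_bound:
  fixes x :: "'i \<Rightarrow> real"
  assumes "finite I" "t > 0" "s \<ge> 0" "\<And>i. i \<in> I \<Longrightarrow> x i \<ge> 0"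
  shows "real (Max {card A | A. A \<subseteq> I \<and> (\<Sum>i\<in>A. x i) \<le> s})
           \<le> s / t + (\<Sum>i\<in>I. truncation_weight t (x i))"
proof -
  let ?C = "{card A | A. A \<subseteq> I \<and> (\<Sum>i\<in>A. x i) \<le> s}"
  have "finite ?C"
    using assms(1) by (intro finite_surj[where f = card and A = "Pow I"]) auto
  moreover have "?C \<noteq> {}"
    using assms(3) by (auto intro!: exI[of _ "{}"])
  ultimately have "Max ?C \<in> ?C"
    by (rule Max_in)
  then obtain A where "A \<subseteq> I" "(\<Sum>i\<in>A. x i) \<le> s" "Max ?C = card A"
    by blast
  then show ?thesis
    using assms card_le_truncation_weight_bound[of I A t x s] by simp
qed

lemma (in prob_space) integrable_truncation_weight:
  assumes "random_variable borel Y" "t > 0"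
  shows "integrable M (\<lambda>\<omega>. truncation_weight t (Y \<omega>))"
  using assms abs_truncation_weight_le by (intro integrable_const_bound[where B = 2]) auto

lemma (in prob_space) expectation_truncation_weight:
  assumes "random_variable borel Y" "t > 0"
  shows "expectation (\<lambda>\<omega>. truncation_weight t (Y \<omega>))
           = cdf (distr M borel Y) t - (LINT x:{0..t}|distr M borel Y. x) / t"
proof -
  let ?D = "distr M borel Y"
  interpret D: prob_space ?D
    using assms(1) by (rule prob_space_distr)
  have int_cdf: "integrable ?D (indicator {..t} :: real \<Rightarrow> real)"
    by (rule D.integrable_const_bound[where B = 1]) (auto simp: indicator_def)
  have int_mean: "integrable ?D (\<lambda>x. indicator {0..t} x * x / t)"
    by (rule D.integrable_const_bound[where B = 1])
       (use assms(2) in \<open>auto simp: indicator_def field_simps\<close>)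
  have "expectation (\<lambda>\<omega>. truncation_weight t (Y \<omega>)) = integral\<^sup>L ?D (truncation_weight t)"
    using assms(1) by (simp add: integral_distr)
  also have "\<dots> = integral\<^sup>L ?D (indicator {..t}) - integral\<^sup>L ?D (\<lambda>x. indicator {0..t} x * x / t)"
    unfolding truncation_weight_def[abs_def] by (rule Bochner_Integration.integral_diff[OF int_cdf int_mean])
  also have "\<dots> = cdf ?D t - (LINT x:{0..t}|?D. x) / t"
    by (simp add: cdf_def set_lebesgue_integral_def)
  finally show ?thesis .
qed

lemma (in prob_space) expectation_const_add_truncation_weight_sum:
  assumes "finite I" "t > 0" "\<And>i. i \<in> I \<Longrightarrow> random_variable borel (X i)"
  shows "expectation (\<lambda>\<omega>. s / t + (\<Sum>i\<in>I. truncation_weight t (X i \<omega>)))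
           = s / t + (\<Sum>i\<in>I. cdf (distr M borel (X i)) t)
             - (\<Sum>i\<in>I. LINT x:{0..t}|distr M borel (X i). x) / t"
  using assms
  by (simp add: Bochner_Integration.integral_add Bochner_Integration.integral_sum
      Bochner_Integration.integrable_sum integrable_truncation_weight expectation_truncation_weight
      prob_space sum_subtractf sum_divide_distrib)

theorem theorem1:
  fixes M :: "'a measure" and X :: "nat \<Rightarrow> 'a \<Rightarrow> real"
    and n :: nat and s t :: real
  assumes "prob_space M"
    and "n \<ge> 1"
    and rv: "\<And>i. i \<in> {1..n} \<Longrightarrow> X i \<in> borel_measurable M"
    and nonneg: "\<And>i \<omega>. i \<in> {1..n} \<Longrightarrow> \<omega> \<in> space M \<Longrightarrow> X i \<omega> \<ge> 0"
    and cont: "\<And>i. i \<in> {1..n} \<Longrightarrow> continuous_on UNIV (cdf (distr M borel (X i)))"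
    and "s > 0" and "t > 0"
    and t_def: "s = (\<Sum>i=1..n. (LINT x:{0..t}|distr M borel (X i). x))"
  shows "(\<integral>\<omega>. real (Max {card A | A. A \<subseteq> {1..n} \<and> (\<Sum>i\<in>A. X i \<omega>) \<le> s}) \<partial>M)
           \<le> (\<Sum>i=1..n. cdf (distr M borel (X i)) t)"
proof -
  interpret prob_space M by fact
  let ?N = "\<lambda>\<omega>. real (Max {card A | A. A \<subseteq> {1..n} \<and> (\<Sum>i\<in>A. X i \<omega>) \<le> s})"
  let ?g = "\<lambda>\<omega>. s / t + (\<Sum>i\<in>{1..n}. truncation_weight t (X i \<omega>))"
  have "integrable M ?g"
    using rv \<open>t > 0\<close> by (auto intro!: Bochner_Integration.integrable_sum integrable_truncation_weight)
  moreover have "?N \<omega> \<le> ?g \<omega>" if "\<omega> \<in> space M" for \<omega>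
    using that nonneg \<open>s > 0\<close> \<open>t > 0\<close> by (intro Max_card_le_truncation_weight_bound) auto
  moreover have "expectation ?g = (\<Sum>i=1..n. cdf (distr M borel (X i)) t)"
    using expectation_const_add_truncation_weight_sum[of "{1..n}" t X s] rv \<open>t > 0\<close>
    unfolding t_def[symmetric] by simp
  moreover have "0 \<le> (\<Sum>i=1..n. cdf (distr M borel (X i)) t)"
    by (intro sum_nonneg) (simp add: cdf_def)
  \<comment> \<open>If \<open>?N\<close> is not integrable its Bochner integral is \<open>0\<close>, so the bound holds trivially.\<close>
  ultimately show ?thesis
    by (cases "integrable M ?N") (auto intro: order_trans[OF integral_mono] simp: not_integrable_integral_eq)
qed

end
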